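(* Let $D\subseteq\mathbb{Z}$, let $\ell\ge0$, $c>0$, and let $f:D\to\mathbb{Z}$ satisfy $f(j)-f(i)\ge c(j-i)$ for all $i,j\in D$ with $j\ge i+\ell$. Let $T$ be a $D$-valued random variable with $\mathbb{E}|f(T)|^r<+\infty$, where $r\ge1$. Then \[ \mathbb{M}_r(f(T))\ge\left(\frac{c}{2}\right)^r\left(\mathbb{M}_r(T)-\ell^r\right), \] where $\mathbb{M}_r(U):=\mathbb{E}|U-\mathbb{E}U|^r$. *)

theory Defs
  imports "HOL-Probability.Probability"
begin

definition central_moment :: "'a measure \<Rightarrow> real \<Rightarrow> ('a \<Rightarrow> real) \<Rightarrow> real" where
  "central_moment M r U = integral\<^sup>L M (\<lambda>x. \<bar>U x - integral\<^sup>L M U\<bar> powr r)"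

end

theory Submission
  imports Defs
begin

text \<open>Write \<open>U'\<close> for an independent copy of a random variable \<open>U\<close>. For \<open>r \<ge> 1\<close> the pairwise
moment \<open>E|U - U'|^r\<close> lies between \<open>M\<^sub>r(U)\<close> (Jensen, conditioning on \<open>U\<close>) and \<open>2^r M\<^sub>r(U)\<close>
(convexity of \<open>|.|^r\<close> around \<open>E U\<close>). The growth condition on \<open>f\<close> gives pointwise
\<open>|f(T) - f(T')|^r \<ge> c^r (|T - T'|^r - \<ell>^r)\<close>, and chaining
\<open>c^r (M\<^sub>r(T) - \<ell>^r) \<le> c^r (E|T - T'|^r - \<ell>^r) \<le> E|f(T) - f(T')|^r \<le> 2^r M\<^sub>r(f(T))\<close>
gives the claim.\<close>

lemma convex_on_nonneg_powr:
  assumes "r \<ge> 1"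
  shows "convex_on {0..} (\<lambda>x::real. x powr r)"
proof (rule convex_on_linorderI)
  fix t x y :: real
  assume t: "0 < t" "t < 1" and xy: "x \<in> {0..}" "y \<in> {0..}" "x < y"
  show "((1 - t) *\<^sub>R x + t *\<^sub>R y) powr r \<le> (1 - t) * x powr r + t * y powr r"
  proof (cases "x = 0")
    case True
    have "t powr r \<le> t powr 1"
      using t assms by (intro powr_mono') auto
    then have "t powr r * y powr r \<le> t * y powr r"
      using t by (intro mult_right_mono) auto
    then show ?thesis
      using True t xy by (simp add: powr_mult)
  next
    case False
    then show ?thesis
      using convex_onD[OF powr_convex[OF assms], of t x y] t xy by auto
  qed
qed auto

lemma convex_on_abs_powr:
  assumes "r \<ge> 1"
  shows "convex_on UNIV (\<lambda>x::real. \<bar>x\<bar> powr r)"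
proof (rule convex_onI)
  fix t x y :: real
  assume t: "0 < t" "t < 1"
  have "\<bar>(1 - t) *\<^sub>R x + t *\<^sub>R y\<bar> \<le> (1 - t) *\<^sub>R \<bar>x\<bar> + t *\<^sub>R \<bar>y\<bar>"
    using t abs_triangle_ineq[of "(1 - t) * x" "t * y"] by (simp add: abs_mult)
  then have "\<bar>(1 - t) *\<^sub>R x + t *\<^sub>R y\<bar> powr r \<le> ((1 - t) *\<^sub>R \<bar>x\<bar> + t *\<^sub>R \<bar>y\<bar>) powr r"
    using assms by (intro powr_mono2) auto
  also have "\<dots> \<le> (1 - t) * \<bar>x\<bar> powr r + t * \<bar>y\<bar> powr r"
    using convex_onD[OF convex_on_nonneg_powr[OF assms], of t "\<bar>x\<bar>" "\<bar>y\<bar>"] t by auto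
  finally show "\<bar>(1 - t) *\<^sub>R x + t *\<^sub>R y\<bar> powr r \<le> (1 - t) * \<bar>x\<bar> powr r + t * \<bar>y\<bar> powr r" .
qed auto

lemma abs_add_powr_le:
  fixes a b r :: real
  assumes "r \<ge> 1"
  shows "\<bar>a + b\<bar> powr r \<le> 2 powr (r - 1) * (\<bar>a\<bar> powr r + \<bar>b\<bar> powr r)"
proof -
  have "\<bar>a + b\<bar> powr r = 2 powr r * \<bar>(1 - 1/2) *\<^sub>R a + (1/2) *\<^sub>R b\<bar> powr r"
  proof -
    have "\<bar>a + b\<bar> = 2 * \<bar>(1 - 1/2) *\<^sub>R a + (1/2) *\<^sub>R b\<bar>"
      by (simp add: abs_if)
    then show ?thesis
      by (simp add: powr_mult)
  qed
  also have "\<dots> \<le> 2 powr r * ((1 - 1/2) * \<bar>a\<bar> powr r + (1/2) * \<bar>b\<bar> powr r)"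
    using convex_onD[OF convex_on_abs_powr[OF assms], of "1/2" a b] by (intro mult_left_mono) auto
  also have "\<dots> = 2 powr (r - 1) * (\<bar>a\<bar> powr r + \<bar>b\<bar> powr r)"
    by (simp add: powr_diff field_simps)
  finally show ?thesis .
qed

lemma abs_diff_powr_ge_of_expanding:
  fixes s t u v l c r :: real
  assumes "l \<ge> 0" "c \<ge> 0" "r \<ge> 0"
    and "t \<ge> s + l \<Longrightarrow> v - u \<ge> c * (t - s)"
    and "s \<ge> t + l \<Longrightarrow> u - v \<ge> c * (s - t)"
  shows "c powr r * (\<bar>t - s\<bar> powr r - l powr r) \<le> \<bar>v - u\<bar> powr r"
proof (cases "\<bar>t - s\<bar> \<ge> l")
  case True
  then have "c * \<bar>t - s\<bar> \<le> \<bar>v - u\<bar>"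
    using assms by (cases "t \<ge> s") auto
  then have "c powr r * \<bar>t - s\<bar> powr r \<le> \<bar>v - u\<bar> powr r"
    using assms by (auto simp: powr_mult[symmetric] intro: powr_mono2)
  then show ?thesis
    by (smt (verit) assms(2) mult_left_mono powr_ge_zero)
next
  case False
  then have "\<bar>t - s\<bar> powr r \<le> l powr r"
    using assms by (intro powr_mono2) auto
  then show ?thesis
    by (smt (verit) assms(2) mult_nonneg_nonpos powr_ge_zero powr_nonneg_iff)
qed

lemma (in finite_measure) integrable_of_integrable_abs_powr:
  fixes X :: "'a \<Rightarrow> real"
  assumes "r \<ge> 1" "X \<in> borel_measurable M" "integrable M (\<lambda>x. \<bar>X x\<bar> powr r)"
  shows "integrable M X"
proof (rule Bochner_Integration.integrable_bound[OF _ assms(2)])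
  show "integrable M (\<lambda>x. 1 + \<bar>X x\<bar> powr r)"
    using assms(3) by auto
  have "\<bar>X x\<bar> \<le> 1 + \<bar>X x\<bar> powr r" for x
  proof (cases "\<bar>X x\<bar> \<le> 1")
    case False
    then have "\<bar>X x\<bar> powr 1 \<le> \<bar>X x\<bar> powr r"
      using assms(1) by (intro powr_mono) auto
    then show ?thesis
      by simp
  qed (simp add: add_increasing2)
  then show "AE x in M. norm (X x) \<le> norm (1 + \<bar>X x\<bar> powr r)"
    by (simp add: add_increasing2)
qed

lemma (in finite_measure) integrable_abs_diff_powr:
  fixes X :: "'a \<Rightarrow> real"
  assumes "r \<ge> 1" "X \<in> borel_measurable M" "integrable M (\<lambda>x. \<bar>X x - a\<bar> powr r)"
  shows "integrable M (\<lambda>x. \<bar>X x - b\<bar> powr r)"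
proof (rule Bochner_Integration.integrable_bound)
  show "integrable M (\<lambda>x. 2 powr (r - 1) * (\<bar>X x - a\<bar> powr r + \<bar>a - b\<bar> powr r))"
    using assms(3) by auto
  show "(\<lambda>x. \<bar>X x - b\<bar> powr r) \<in> borel_measurable M"
    using assms(2) by measurable
  show "AE x in M. norm (\<bar>X x - b\<bar> powr r) \<le> norm (2 powr (r - 1) * (\<bar>X x - a\<bar> powr r + \<bar>a - b\<bar> powr r))"
    using abs_add_powr_le[OF assms(1), of "X _ - a" "a - b"] by simp
qed

text \<open>\<open>E|X - X'|^r\<close> for an independent copy \<open>X'\<close> of \<open>X\<close>, written as an iterated integral.\<close>

definition pairwise_moment :: "'a measure \<Rightarrow> real \<Rightarrow> ('a \<Rightarrow> real) \<Rightarrow> real" where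
  "pairwise_moment M r X = (\<integral>x. (\<integral>y. \<bar>X x - X y\<bar> powr r \<partial>M) \<partial>M)"

context prob_space
begin

context
  fixes X :: "'a \<Rightarrow> real" and r :: real
  assumes r: "r \<ge> 1"
    and X_measurable[measurable]: "X \<in> borel_measurable M"
    and X_moment: "integrable M (\<lambda>x. \<bar>X x\<bar> powr r)"
begin

lemma integrable_of_moment: "integrable M X"
  using integrable_of_integrable_abs_powr[OF r X_measurable X_moment] .

lemma integrable_abs_minus_const_powr: "integrable M (\<lambda>y. \<bar>X y - s\<bar> powr r)"
  using integrable_abs_diff_powr[OF r X_measurable, of 0 s] X_moment by simp

lemma integrable_abs_const_minus_powr: "integrable M (\<lambda>y. \<bar>s - X y\<bar> powr r)"
  using integrable_abs_minus_const_powr by (simp add: abs_minus_commute)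

lemma abs_const_minus_expectation_powr_le: "\<bar>s - expectation X\<bar> powr r \<le> expectation (\<lambda>y. \<bar>s - X y\<bar> powr r)"
proof -
  have "s - expectation X = expectation (\<lambda>y. s - X y)"
    using integrable_of_moment by (simp add: prob_space)
  moreover have "\<bar>expectation (\<lambda>y. s - X y)\<bar> powr r \<le> expectation (\<lambda>y. \<bar>s - X y\<bar> powr r)"
    by (rule jensens_inequality[where I = UNIV and q = "\<lambda>z. \<bar>z\<bar> powr r"])
       (use integrable_of_moment integrable_abs_const_minus_powr convex_on_abs_powr[OF r] in auto)
  ultimately show ?thesis
    by simp
qed

lemma expectation_abs_const_minus_powr_le:
  "expectation (\<lambda>y. \<bar>s - X y\<bar> powr r) \<le> 2 powr (r - 1) * (\<bar>s - expectation X\<bar> powr r + central_moment M r X)"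
proof -
  let ?m = "expectation X"
  have "expectation (\<lambda>y. \<bar>s - X y\<bar> powr r)
      \<le> expectation (\<lambda>y. 2 powr (r - 1) * (\<bar>s - ?m\<bar> powr r + \<bar>X y - ?m\<bar> powr r))"
  proof (rule integral_mono)
    show "integrable M (\<lambda>y. 2 powr (r - 1) * (\<bar>s - ?m\<bar> powr r + \<bar>X y - ?m\<bar> powr r))"
      using integrable_abs_const_minus_powr[of ?m] by (auto simp: abs_minus_commute)
    show "\<bar>s - X y\<bar> powr r \<le> 2 powr (r - 1) * (\<bar>s - ?m\<bar> powr r + \<bar>X y - ?m\<bar> powr r)" for y
      using abs_add_powr_le[OF r, of "s - ?m" "?m - X y"] by (simp add: abs_minus_commute)
  qed (rule integrable_abs_const_minus_powr)
  also have "\<dots> = 2 powr (r - 1) * (\<bar>s - ?m\<bar> powr r + central_moment M r X)"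
    using integrable_abs_const_minus_powr[of ?m]
    by (simp add: central_moment_def prob_space abs_minus_commute)
  finally show ?thesis .
qed

lemma integrable_expectation_abs_diff_powr: "integrable M (\<lambda>x. expectation (\<lambda>y. \<bar>X x - X y\<bar> powr r))"
proof (rule Bochner_Integration.integrable_bound)
  show "integrable M (\<lambda>x. 2 powr (r - 1) * (\<bar>X x - expectation X\<bar> powr r + central_moment M r X))"
    using integrable_abs_const_minus_powr[of "expectation X"] by (auto simp: abs_minus_commute)
  show "(\<lambda>x. expectation (\<lambda>y. \<bar>X x - X y\<bar> powr r)) \<in> borel_measurable M"
    by measurable
  show "AE x in M. norm (expectation (\<lambda>y. \<bar>X x - X y\<bar> powr r))
      \<le> norm (2 powr (r - 1) * (\<bar>X x - expectation X\<bar> powr r + central_moment M r X))"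
    using expectation_abs_const_minus_powr_le order_trans[OF integral_nonneg_AE]
    by (auto simp: central_moment_def intro!: AE_I2)
qed

lemma central_moment_le_pairwise_moment: "central_moment M r X \<le> pairwise_moment M r X"
  unfolding central_moment_def pairwise_moment_def
  using abs_const_minus_expectation_powr_le integrable_expectation_abs_diff_powr
    integrable_abs_minus_const_powr
  by (intro integral_mono) auto

lemma pairwise_moment_le_central_moment: "pairwise_moment M r X \<le> 2 powr r * central_moment M r X"
proof -
  have "pairwise_moment M r X
      \<le> expectation (\<lambda>x. 2 powr (r - 1) * (\<bar>X x - expectation X\<bar> powr r + central_moment M r X))"
    unfolding pairwise_moment_def
    using expectation_abs_const_minus_powr_le integrable_expectation_abs_diff_powr
      integrable_abs_minus_const_powr
    by (intro integral_mono) auto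
  also have "\<dots> = 2 powr r * central_moment M r X"
    using integrable_abs_const_minus_powr[of "expectation X"]
    by (simp add: central_moment_def prob_space abs_minus_commute powr_diff)
  finally show ?thesis .
qed

end

lemma pairwise_moment_mono:
  fixes X Y :: "'a \<Rightarrow> real"
  assumes r: "r \<ge> 1"
    and X: "X \<in> borel_measurable M" "integrable M (\<lambda>x. \<bar>X x\<bar> powr r)"
    and Y: "Y \<in> borel_measurable M" "integrable M (\<lambda>x. \<bar>Y x\<bar> powr r)"
    and le: "\<And>x y. x \<in> space M \<Longrightarrow> y \<in> space M \<Longrightarrow> a * \<bar>Y x - Y y\<bar> powr r - b \<le> \<bar>X x - X y\<bar> powr r"
  shows "a * pairwise_moment M r Y - b \<le> pairwise_moment M r X"
proof -
  have "a * pairwise_moment M r Y - b = expectation (\<lambda>x. expectation (\<lambda>y. a * \<bar>Y x - Y y\<bar> powr r - b))"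
    using integrable_expectation_abs_diff_powr[OF r Y] integrable_abs_const_minus_powr[OF r Y]
    by (simp add: pairwise_moment_def prob_space)
  also have "\<dots> \<le> pairwise_moment M r X"
    unfolding pairwise_moment_def
  proof (intro integral_mono)
    show "integrable M (\<lambda>x. expectation (\<lambda>y. a * \<bar>Y x - Y y\<bar> powr r - b))"
      using integrable_expectation_abs_diff_powr[OF r Y] integrable_abs_const_minus_powr[OF r Y]
      by (simp add: prob_space)
  qed (use le integrable_expectation_abs_diff_powr[OF r X] integrable_abs_const_minus_powr[OF r X]
         integrable_abs_const_minus_powr[OF r Y] in auto)
  finally show ?thesis .
qed

lemma integrable_abs_powr_of_abs_diff_powr_le:
  fixes X Y :: "'a \<Rightarrow> real"
  assumes r: "r \<ge> 1"
    and X: "X \<in> borel_measurable M" "integrable M (\<lambda>x. \<bar>X x\<bar> powr r)"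
    and Y_measurable: "Y \<in> borel_measurable M"
    and a: "a > 0"
    and le: "\<And>x y. x \<in> space M \<Longrightarrow> y \<in> space M \<Longrightarrow> a * \<bar>Y x - Y y\<bar> powr r - b \<le> \<bar>X x - X y\<bar> powr r"
  shows "integrable M (\<lambda>x. \<bar>Y x\<bar> powr r)"
proof -
  obtain y where y: "y \<in> space M"
    using not_empty by blast
  have "integrable M (\<lambda>x. \<bar>Y x - Y y\<bar> powr r)"
  proof (rule Bochner_Integration.integrable_bound)
    show "integrable M (\<lambda>x. (\<bar>X x - X y\<bar> powr r + b) / a)"
      using integrable_abs_minus_const_powr[OF r X] by auto
    show "(\<lambda>x. \<bar>Y x - Y y\<bar> powr r) \<in> borel_measurable M"
      using Y_measurable by measurable
    show "AE x in M. norm (\<bar>Y x - Y y\<bar> powr r) \<le> norm ((\<bar>X x - X y\<bar> powr r + b) / a)"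
      using le[OF _ y] a by (auto intro!: AE_I2 simp: field_simps intro: order_trans[OF _ abs_ge_self])
  qed
  then show ?thesis
    using integrable_abs_diff_powr[OF r Y_measurable, of "Y y" 0] by simp
qed

lemma central_moment_le_of_abs_diff_powr_le:
  fixes X Y :: "'a \<Rightarrow> real"
  assumes r: "r \<ge> 1"
    and X: "X \<in> borel_measurable M" "integrable M (\<lambda>x. \<bar>X x\<bar> powr r)"
    and Y_measurable: "Y \<in> borel_measurable M"
    and a: "a > 0"
    and le: "\<And>x y. x \<in> space M \<Longrightarrow> y \<in> space M \<Longrightarrow> a * \<bar>Y x - Y y\<bar> powr r - b \<le> \<bar>X x - X y\<bar> powr r"
  shows "a * central_moment M r Y - b \<le> 2 powr r * central_moment M r X"
proof -
  note Y = Y_measurable integrable_abs_powr_of_abs_diff_powr_le[OF r X Y_measurable a le]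
  have "a * central_moment M r Y - b \<le> a * pairwise_moment M r Y - b"
    using central_moment_le_pairwise_moment[OF r Y] a by simp
  also have "\<dots> \<le> pairwise_moment M r X"
    using pairwise_moment_mono[OF r X Y le] .
  also have "\<dots> \<le> 2 powr r * central_moment M r X"
    using pairwise_moment_le_central_moment[OF r X] .
  finally show ?thesis .
qed

end

theorem lemma2p2:
  fixes M :: "'a measure" and D :: "int set" and f :: "int \<Rightarrow> int"
    and T :: "'a \<Rightarrow> int" and l c r :: real
  assumes "prob_space M"
    and "l \<ge> 0" and "c > 0" and "r \<ge> 1"
    and "\<And>i j. i \<in> D \<Longrightarrow> j \<in> D \<Longrightarrow> real_of_int j \<ge> real_of_int i + l
           \<Longrightarrow> real_of_int (f j - f i) \<ge> c * real_of_int (j - i)"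
    and "T \<in> M \<rightarrow>\<^sub>M count_space UNIV"
    and "\<And>x. x \<in> space M \<Longrightarrow> T x \<in> D"
    and "integrable M (\<lambda>x. \<bar>real_of_int (f (T x))\<bar> powr r)"
  shows "central_moment M r (\<lambda>x. real_of_int (f (T x)))
           \<ge> (c / 2) powr r * (central_moment M r (\<lambda>x. real_of_int (T x)) - l powr r)"
proof -
  interpret prob_space M by fact
  have measurable_T: "(\<lambda>x. g (T x)) \<in> borel_measurable M" for g :: "int \<Rightarrow> real"
    using assms(6) by measurable
  have "c powr r * \<bar>real_of_int (T x) - T y\<bar> powr r - c powr r * l powr r
      \<le> \<bar>real_of_int (f (T x)) - f (T y)\<bar> powr r" if "x \<in> space M" "y \<in> space M" for x y
    using abs_diff_powr_ge_of_expanding[where s = "T y" and t = "T x" and u = "f (T y)" and v = "f (T x)"]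
      assms(2-5,7) that by (auto simp: right_diff_distrib)
  from central_moment_le_of_abs_diff_powr_le[OF assms(4) measurable_T assms(8) measurable_T _ this]
  have "c powr r * central_moment M r (\<lambda>x. real_of_int (T x)) - c powr r * l powr r
      \<le> 2 powr r * central_moment M r (\<lambda>x. real_of_int (f (T x)))"
    using assms(3) by simp
  then show ?thesis
    by (simp add: powr_divide field_simps)
qed

end
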